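(* Let $m \ge 2$ and $n \ge 2m+1$ be integers, and write $p_j = n-2m+2j$. Then for every real $r$ with $|r|<1$, $$\int_{-1}^1 \frac{U_n(s)(1-s^2)^{m-\frac{1}{2}}}{(s-r)^4}\,ds = (-1)^{m}\left(\frac{1}{2}\right)^{2m+1}\frac{1}{3}\frac{\pi}{(1-r^2)^2}\sum_{j=0}^{2m-2}(-1)^j\binom{2m-2}{j}(p_j+3)\Big\{(p_j+4)(p_j+5)U_{p_j}(r)-\big[2p_j^2+12p_j+10\big]U_{p_j+2}(r)+(p_j+2)(p_j+1)U_{p_j+4}(r)\Big\},$$ where the integral is a Hadamard finite-part integral.
   Context: $U_k(s)=\frac{\sin((k+1)\cos^{-1}s)}{\sin(\cos^{-1}s)}$ is the Tchebyshev polynomial of the second kind. For a positive integer $\alpha\ge 2$ and $|r|<1$, the integral $\int_{-1}^1 \frac{D(s)}{(s-r)^\alpha}ds$ is understood in the Hadamard finite-part sense; in particular it satisfies $\int_{-1}^1 \frac{D(s)}{(s-r)^{\alpha}}ds=\frac{1}{\alpha-1}\frac{d}{dr}\int_{-1}^1\frac{D(s)}{(s-r)^{\alpha-1}}ds$, where for $\alpha-1=1$ the right-hand integral is a Cauchy principal value. $\binom{a}{j}=\frac{a!}{j!(a-j)!}$. *)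

theory Defs
  imports "HOL-Analysis.Analysis"
begin

definition chebU :: "nat \<Rightarrow> real \<Rightarrow> real" where
  "chebU k s = sin ((real k + 1) * arccos s) / sin (arccos s)"

definition cpv_int :: "(real \<Rightarrow> real) \<Rightarrow> real \<Rightarrow> real" where
  "cpv_int D r = Lim (at_right 0)
     (\<lambda>e. integral {-1..r-e} (\<lambda>s. D s / (s - r)) + integral {r+e..1} (\<lambda>s. D s / (s - r)))"

text \<open>Hadamard finite-part integral of D(s)/(s-r)^alpha over [-1,1], alpha >= 1,
  defined recursively: order 1 is the Cauchy principal value, and
  order alpha = 1/(alpha-1) * d/dr of order alpha-1.\<close>
fun hadamard_fp :: "nat \<Rightarrow> (real \<Rightarrow> real) \<Rightarrow> real \<Rightarrow> real" where
  "hadamard_fp (Suc 0) D r = cpv_int D r"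
| "hadamard_fp (Suc (Suc k)) D r = deriv (hadamard_fp (Suc k) D) r / (real k + 1)"

end

theory Submission
  imports Defs
begin

(* With s = cos t, the weight U_n(s) (1 - s^2)^(m - 1/2) equals sin((n+1) t) sin(t)^(2m-2), which
   the binomial theorem for (e^(it) - e^(-it))^(2m-2) turns into a signed binomial combination of
   the functions sin(K arccos s) with K = p_j + 3.  For each of them the principal value
   PV int_{-1}^1 sin(K arccos s) / (s - r) ds equals -pi T_K(r) = -pi cos(K arccos r): for K = 1
   this comes from an explicit antiderivative, and the recurrence
   sin((K+2) t) = 2 cos t sin((K+1) t) - sin(K t) propagates it to all K.  The finite-part integral
   of order 4 is a sixth of the third derivative of the principal value, and the third derivative
   of T_K is a combination of U_(K-3), U_(K-1) and U_(K+1). *)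

section \<open>Expanding the weight\<close>

lemma sin_times_sin_power_even:
  fixes x t :: real and M :: nat
  shows "sin x * sin t ^ (2 * M) = (-1) ^ M / 4 ^ M *
     (\<Sum>j\<le>2 * M. (-1) ^ j * real (2 * M choose j) * sin (x + (2 * real j - 2 * real M) * t))"
proof -
  have two_i_sin: "complex_of_real (2 * sin t) * \<i> = cis t + (- cis (-t))"
    by (simp add: complex_eq_iff)
  have "(complex_of_real (2 * sin t) * \<i>) ^ (2 * M) =
      (\<Sum>k\<le>2 * M. of_nat (2 * M choose k) * cis t ^ k * (- cis (-t)) ^ (2 * M - k))"
    unfolding two_i_sin by (rule binomial_ring)
  also have "\<dots> = (\<Sum>k\<le>2 * M. complex_of_real ((-1) ^ k * real (2 * M choose k)) *
      cis ((2 * real k - 2 * real M) * t))"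
  proof (rule sum.cong[OF refl])
    fix k
    assume "k \<in> {..2 * M}"
    then have k: "k \<le> 2 * M"
      by simp
    have "(- cis (-t)) ^ (2 * M - k) = (-1) ^ (2 * M - k) * cis (real (2 * M - k) * (-t))"
      by (simp only: power_minus[of "cis (-t)"] Complex.DeMoivre)
    also have "\<dots> = (-1) ^ k * cis (real (2 * M - k) * (-t))"
      using k by (simp add: minus_one_power_iff)
    finally have neg_cis_power: "(- cis (-t)) ^ (2 * M - k) = (-1) ^ k * cis (real (2 * M - k) * (-t))" .
    have "cis t ^ k * cis (real (2 * M - k) * (-t)) = cis ((2 * real k - 2 * real M) * t)"
      using k by (simp add: Complex.DeMoivre cis_mult of_nat_diff algebra_simps)
    then show "of_nat (2 * M choose k) * cis t ^ k * (- cis (-t)) ^ (2 * M - k) =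
        complex_of_real ((-1) ^ k * real (2 * M choose k)) * cis ((2 * real k - 2 * real M) * t)"
      unfolding neg_cis_power by (simp add: algebra_simps)
  qed
  finally have binomial: "(complex_of_real (2 * sin t) * \<i>) ^ (2 * M) =
      (\<Sum>k\<le>2 * M. complex_of_real ((-1) ^ k * real (2 * M choose k)) * cis ((2 * real k - 2 * real M) * t))" .
  have power: "(complex_of_real (2 * sin t) * \<i>) ^ (2 * M) = complex_of_real ((-1) ^ M * 4 ^ M * sin t ^ (2 * M))"
    by (simp add: power_mult_distrib power_mult power_minus[of "4 * (complex_of_real (sin t))\<^sup>2"])
  have "sin x * sin t ^ (2 * M) = Im (cis x * complex_of_real (sin t ^ (2 * M)))"
    by simp
  also have "complex_of_real (sin t ^ (2 * M)) =
      complex_of_real ((-1) ^ M / 4 ^ M) * (complex_of_real (2 * sin t) * \<i>) ^ (2 * M)"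
    unfolding power by (simp add: field_simps)
  also have "cis x * (complex_of_real ((-1) ^ M / 4 ^ M) * (complex_of_real (2 * sin t) * \<i>) ^ (2 * M)) =
      complex_of_real ((-1) ^ M / 4 ^ M) * (\<Sum>k\<le>2 * M. complex_of_real ((-1) ^ k * real (2 * M choose k)) *
        cis (x + (2 * real k - 2 * real M) * t))"
    unfolding binomial by (simp add: sum_distrib_left cis_mult[symmetric] mult_ac)
  also have "Im \<dots> = (-1) ^ M / 4 ^ M *
     (\<Sum>j\<le>2 * M. (-1) ^ j * real (2 * M choose j) * sin (x + (2 * real j - 2 * real M) * t))"
    by (simp add: Im_sum)
  finally show ?thesis .
qed

lemma chebU_mult_weight_eq_sin_sum:
  fixes n M :: nat and s :: real
  assumes n: "2 * M \<le> n" and s: "-1 \<le> s" "s \<le> 1"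
  shows "chebU n s * (1 - s\<^sup>2) powr (real M + 1 / 2) = (-1) ^ M / 4 ^ M *
    (\<Sum>j\<le>2 * M. (-1) ^ j * real (2 * M choose j) * sin (real (n - 2 * M + 2 * j + 1) * arccos s))"
proof -
  have "chebU n s * (1 - s\<^sup>2) powr (real M + 1 / 2) = sin ((real n + 1) * arccos s) * sin (arccos s) ^ (2 * M)"
  proof (cases "s = 1 \<or> s = -1")
    case True
    then have "sin ((real n + 1) * arccos s) = 0"
      using sin_npi[of "n + 1"] by (auto simp: add.commute)
    with True show ?thesis
      by auto
  next
    case False
    with s have "s\<^sup>2 < 1"
      by (simp add: abs_square_less_1 abs_less_iff)
    then have "(1 - s\<^sup>2) powr (real M + 1 / 2) = sin (arccos s) ^ (2 * M) * sin (arccos s)"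
      using s by (simp add: powr_add powr_realpow powr_half_sqrt sin_arccos power_mult)
    moreover have "sin (arccos s) \<noteq> 0"
      using False s by (intro sin_arccos_nonzero) auto
    ultimately show ?thesis
      by (simp add: chebU_def)
  qed
  also have "\<dots> = (-1) ^ M / 4 ^ M * (\<Sum>j\<le>2 * M. (-1) ^ j * real (2 * M choose j) *
      sin ((real n + 1) * arccos s + (2 * real j - 2 * real M) * arccos s))"
    by (rule sin_times_sin_power_even)
  also have "\<dots> = (-1) ^ M / 4 ^ M *
      (\<Sum>j\<le>2 * M. (-1) ^ j * real (2 * M choose j) * sin (real (n - 2 * M + 2 * j + 1) * arccos s))"
    using n by (simp add: of_nat_diff algebra_simps)
  finally show ?thesis .
qed

section \<open>Principal values\<close>

definition pv_trunc :: "(real \<Rightarrow> real) \<Rightarrow> real \<Rightarrow> real \<Rightarrow> real" where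
  "pv_trunc D r e = integral {-1..r-e} (\<lambda>s. D s / (s - r)) + integral {r+e..1} (\<lambda>s. D s / (s - r))"

lemma cpv_int_eqI:
  assumes "(pv_trunc D r \<longlongrightarrow> L) (at_right 0)"
  shows "cpv_int D r = L"
  using tendsto_Lim[OF trivial_limit_at_right_real assms]
  unfolding cpv_int_def pv_trunc_def by simp

lemma tendsto_punctured_integral_antiderivative:
  fixes g G :: "real \<Rightarrow> real"
  assumes r: "-1 < r" "r < 1"
    and cont: "continuous_on ({-1..1} - {r}) G"
    and deriv: "\<And>s. -1 < s \<Longrightarrow> s < 1 \<Longrightarrow> s \<noteq> r \<Longrightarrow> (G has_real_derivative g s) (at s)"
    and jump: "((\<lambda>e. G (r - e) - G (r + e)) \<longlongrightarrow> 0) (at_right 0)"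
  shows "((\<lambda>e. integral {-1..r-e} g + integral {r+e..1} g) \<longlongrightarrow> G 1 - G (-1)) (at_right 0)"
proof -
  have "\<forall>\<^sub>F e in at_right 0.
      (G 1 - G (-1)) + (G (r - e) - G (r + e)) = integral {-1..r-e} g + integral {r+e..1} g"
  proof (rule eventually_mono[OF eventually_at_right_real[of 0 "min (1 + r) (1 - r)"]])
    fix e assume e: "e \<in> {0<..<min (1 + r) (1 - r)}"
    have "(g has_integral G (r - e) - G (-1)) {-1..r-e}"
      using e deriv by (intro fundamental_theorem_of_calculus_interior continuous_on_subset[OF cont])
        (auto simp: has_real_derivative_iff_has_vector_derivative[symmetric])
    moreover have "(g has_integral G 1 - G (r + e)) {r+e..1}"
      using e deriv by (intro fundamental_theorem_of_calculus_interior continuous_on_subset[OF cont])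
        (auto simp: has_real_derivative_iff_has_vector_derivative[symmetric])
    ultimately show "(G 1 - G (-1)) + (G (r - e) - G (r + e)) = integral {-1..r-e} g + integral {r+e..1} g"
      by (simp add: integral_unique)
  qed (use r in auto)
  moreover have "((\<lambda>e. (G 1 - G (-1)) + (G (r - e) - G (r + e))) \<longlongrightarrow> (G 1 - G (-1)) + 0) (at_right 0)"
    by (intro tendsto_add tendsto_const jump)
  ultimately show ?thesis
    using tendsto_cong by force
qed

lemma tendsto_shift_diff_at_right:
  fixes F :: "real \<Rightarrow> real"
  assumes "isCont F r"
  shows "((\<lambda>e. F (r - e) - F (r + e)) \<longlongrightarrow> 0) (at_right 0)"
proof -
  have "((\<lambda>e. F (r - e)) \<longlongrightarrow> F r) (at_right 0)" "((\<lambda>e. F (r + e)) \<longlongrightarrow> F r) (at_right 0)"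
    by (auto intro!: isCont_tendsto_compose[OF assms] tendsto_eq_intros)
  then show ?thesis
    using tendsto_diff by fastforce
qed

lemma sin_mult_arccos_antiderivative:
  fixes K :: nat
  assumes K: "K \<ge> 1"
  defines "F \<equiv> \<lambda>s. (sin ((real K + 1) * arccos s) / (real K + 1) -
      (if K = 1 then arccos s else sin ((real K - 1) * arccos s) / (real K - 1))) / 2"
  shows "continuous_on {-1..1} F"
    and "\<And>s. -1 < s \<Longrightarrow> s < 1 \<Longrightarrow> (F has_real_derivative sin (real K * arccos s)) (at s)"
    and "F 1 - F (-1) = (if K = 1 then pi / 2 else 0)"
proof -
  show "continuous_on {-1..1} F"
    unfolding F_def by (cases "K = 1") (auto intro!: continuous_intros)
next
  fix s :: real
  assume s: "-1 < s" "s < 1"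
  define w where "w = sin (arccos s)"
  have w: "w = sqrt (1 - s\<^sup>2)" "w \<noteq> 0"
    using s sin_arccos_nonzero[of s] by (simp_all add: w_def sin_arccos)
  have cos_diff: "cos ((c - 1) * x) - cos ((c + 1) * x) = 2 * sin (c * x) * sin x" for c x :: real
    by (simp add: algebra_simps cos_add cos_diff)
  have dsin: "((\<lambda>s. sin (c * arccos s) / c) has_real_derivative - cos (c * arccos s) / w) (at s)"
    if "c \<noteq> 0" for c
  proof -
    have "((\<lambda>s. sin (c * arccos s) / c) has_real_derivative
        cos (c * arccos s) * (c * inverse (- sqrt (1 - s\<^sup>2))) / c) (at s)"
      using s by (auto intro!: derivative_eq_intros)
    then show ?thesis
      using w that by (simp add: field_simps)
  qed
  have darccos: "(arccos has_real_derivative - 1 / w) (at s)"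
    using DERIV_arccos[OF s] w by (simp add: inverse_eq_divide)
  have "(F has_real_derivative
      (cos ((real K - 1) * arccos s) - cos ((real K + 1) * arccos s)) / (2 * w)) (at s)"
  proof (cases "K = 1")
    case True
    have "(F has_real_derivative (- cos (2 * arccos s) / w - (- 1 / w)) / 2) (at s)"
      using DERIV_cdivide[OF DERIV_diff[OF dsin[of 2] darccos], where c = 2]
      unfolding F_def True by simp
    then show ?thesis
      using True by (simp add: diff_divide_distrib mult.commute)
  next
    case False
    with K have "real K - 1 \<noteq> 0"
      by simp
    then have "(F has_real_derivative
        (- cos ((real K + 1) * arccos s) / w - (- cos ((real K - 1) * arccos s) / w)) / 2) (at s)"
      using DERIV_cdivide[OF DERIV_diff[OF dsin dsin], where c = 2]
      unfolding F_def using False by simp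
    then show ?thesis
      by (simp add: diff_divide_distrib mult.commute)
  qed
  then show "(F has_real_derivative sin (real K * arccos s)) (at s)"
    using w by (simp add: cos_diff w_def)
next
  have "sin ((real K + 1) * pi) = 0"
    using sin_npi[of "K + 1"] by (simp add: add.commute)
  moreover have "sin ((real K - 1) * pi) = 0" if "K \<noteq> 1"
    using sin_npi[of "K - 1"] K by (simp add: of_nat_diff)
  ultimately show "F 1 - F (-1) = (if K = 1 then pi / 2 else 0)"
    unfolding F_def by simp
qed

lemma tendsto_punctured_integral_sin_mult_arccos:
  fixes K :: nat
  assumes K: "K \<ge> 1" and r: "-1 < r" "r < 1"
  shows "((\<lambda>e. integral {-1..r-e} (\<lambda>s. sin (real K * arccos s))
      + integral {r+e..1} (\<lambda>s. sin (real K * arccos s))) \<longlongrightarrow> (if K = 1 then pi / 2 else 0)) (at_right 0)"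
proof -
  define F where "F \<equiv> \<lambda>s. (sin ((real K + 1) * arccos s) / (real K + 1) -
      (if K = 1 then arccos s else sin ((real K - 1) * arccos s) / (real K - 1))) / 2"
  note F = sin_mult_arccos_antiderivative[OF K, folded F_def]
  have "isCont F r"
    using continuous_on_interior[OF F(1)] r by simp
  then have "((\<lambda>e. integral {-1..r-e} (\<lambda>s. sin (real K * arccos s))
      + integral {r+e..1} (\<lambda>s. sin (real K * arccos s))) \<longlongrightarrow> F 1 - F (-1)) (at_right 0)"
    using F(1,2) r
    by (intro tendsto_punctured_integral_antiderivative tendsto_shift_diff_at_right)
      (auto elim: continuous_on_subset)
  moreover have "F 1 - F (-1) = (if K = 1 then pi / 2 else 0)"
    using F(3) unfolding F_def by simp
  ultimately show ?thesis
    by simp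
qed

lemma one_minus_mult_plus_sqrt_pos:
  fixes r s :: real
  assumes "\<bar>r\<bar> < 1" "\<bar>s\<bar> \<le> 1"
  shows "0 < 1 - r * s + sqrt (1 - r\<^sup>2) * sqrt (1 - s\<^sup>2)"
proof -
  have "\<bar>r\<bar> * \<bar>s\<bar> \<le> \<bar>r\<bar>"
    using assms(2) by (simp add: mult_left_le)
  then have "r * s < 1"
    using assms(1) abs_ge_self[of "r * s"] by (simp add: abs_mult)
  moreover have "0 \<le> sqrt (1 - r\<^sup>2) * sqrt (1 - s\<^sup>2)"
    using assms by (simp add: abs_square_le_1 abs_square_less_1 less_imp_le)
  ultimately show ?thesis
    by linarith
qed

lemma DERIV_ln_abs:
  assumes "x \<noteq> 0"
  shows "((\<lambda>x. ln \<bar>x\<bar>) has_real_derivative 1 / x) (at x)"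
proof (cases "x > 0")
  case True
  show ?thesis
    by (rule has_field_derivative_transform_within_open[OF DERIV_ln_divide[OF True], of "{0<..}"])
      (use True in auto)
next
  case False
  with assms have "x < 0"
    by simp
  have "((\<lambda>x. ln (- x)) has_real_derivative 1 / x) (at x)"
    using \<open>x < 0\<close> by (auto intro!: derivative_eq_intros simp: field_simps)
  then show ?thesis
    by (rule has_field_derivative_transform_within_open[of _ _ _ "{..<0}"]) (use \<open>x < 0\<close> in auto)
qed

lemma sqrt_div_diff_antiderivative:
  fixes r s :: real
  assumes r: "\<bar>r\<bar> < 1" and s: "-1 < s" "s < 1" "s \<noteq> r"
  defines "a \<equiv> sqrt (1 - r\<^sup>2)"
  shows "((\<lambda>s. sqrt (1 - s\<^sup>2) - r * arcsin s - a * ln (1 - r * s + a * sqrt (1 - s\<^sup>2)) + a * ln \<bar>s - r\<bar>)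
      has_real_derivative sqrt (1 - s\<^sup>2) / (s - r)) (at s)"
proof -
  define w where "w = sqrt (1 - s\<^sup>2)"
  define N where "N = 1 - r * s + a * w"
  have s2: "s\<^sup>2 < 1"
    using s by (simp add: abs_square_less_1)
  have w: "w > 0" "w\<^sup>2 = 1 - s\<^sup>2"
    using s2 by (simp_all add: w_def)
  have a2: "a\<^sup>2 = 1 - r\<^sup>2"
    using r by (simp add: a_def abs_square_less_1 less_imp_le)
  have N: "N > 0"
    using one_minus_mult_plus_sqrt_pos[OF r] s by (simp add: N_def a_def w_def)
  have "((\<lambda>s. sqrt (1 - s\<^sup>2)) has_real_derivative - (s / w)) (at s)"
    using s2 w by (auto intro!: derivative_eq_intros simp: w_def field_simps)
  moreover have "(arcsin has_real_derivative 1 / w) (at s)"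
    using DERIV_arcsin[OF s(1,2)] by (simp add: w_def divide_inverse)
  moreover have "((\<lambda>s. ln (1 - r * s + a * sqrt (1 - s\<^sup>2))) has_real_derivative (- r - a * (s / w)) / N) (at s)"
    using s2 w N by (auto intro!: derivative_eq_intros simp: w_def N_def field_simps)
  moreover have "((\<lambda>s. ln \<bar>s - r\<bar>) has_real_derivative 1 / (s - r) * 1) (at s)"
    by (rule DERIV_chain2[OF DERIV_ln_abs]) (use s in \<open>auto intro!: derivative_eq_intros\<close>)
  ultimately have "((\<lambda>s. sqrt (1 - s\<^sup>2) - r * arcsin s - a * ln (1 - r * s + a * sqrt (1 - s\<^sup>2)) + a * ln \<bar>s - r\<bar>)
      has_real_derivative - (s / w) - r * (1 / w) - a * ((- r - a * (s / w)) / N) + a * (1 / (s - r) * 1)) (at s)"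
    by (intro DERIV_add DERIV_diff DERIV_cmult)
  moreover have "- (s / w) - r * (1 / w) - a * ((- r - a * (s / w)) / N) + a * (1 / (s - r)) = w / (s - r)"
  proof -
    have "- (s + r) * (s - r) * N + a * (s - r) * (r * w + a * s) + a * w * N = w\<^sup>2 * N"
      unfolding N_def using w(2) a2 by algebra
    moreover have "s - r \<noteq> 0"
      using s(3) by simp
    ultimately show ?thesis
      using w N a2 by (simp add: field_simps) algebra
  qed
  ultimately show ?thesis
    by (simp add: w_def)
qed

lemma tendsto_pv_trunc_sin_arccos:
  assumes r: "-1 < r" "r < 1"
  shows "(pv_trunc (\<lambda>s. sin (arccos s)) r \<longlongrightarrow> - pi * r) (at_right 0)"
proof -
  define a where "a = sqrt (1 - r\<^sup>2)"
  define H where "H = (\<lambda>s. sqrt (1 - s\<^sup>2) - r * arcsin s - a * ln (1 - r * s + a * sqrt (1 - s\<^sup>2)))"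
  define G where "G = (\<lambda>s. H s + a * ln \<bar>s - r\<bar>)"
  have r': "\<bar>r\<bar> < 1"
    using r by simp
  have "continuous_on {-1..1} H"
    unfolding H_def a_def using one_minus_mult_plus_sqrt_pos[OF r']
    by (intro continuous_intros) (auto simp: less_imp_neq[symmetric])
  then have cont: "continuous_on ({-1..1} - {r}) G" and "isCont H r"
    using r continuous_on_interior[of "{-1..1}" H]
    by (auto simp: G_def intro!: continuous_intros elim: continuous_on_subset)
  have deriv: "(G has_real_derivative sin (arccos s) / (s - r)) (at s)"
    if "-1 < s" "s < 1" "s \<noteq> r" for s
    using sqrt_div_diff_antiderivative[OF r' that] that
    by (simp add: G_def H_def a_def sin_arccos)
  \<comment> \<open>The singular part a ln |s - r| of G is even about r and cancels.\<close>
  have jump: "((\<lambda>e. G (r - e) - G (r + e)) \<longlongrightarrow> 0) (at_right 0)"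
    using tendsto_shift_diff_at_right[OF \<open>isCont H r\<close>] by (simp add: G_def)
  have "(pv_trunc (\<lambda>s. sin (arccos s)) r \<longlongrightarrow> G 1 - G (-1)) (at_right 0)"
    unfolding pv_trunc_def by (rule tendsto_punctured_integral_antiderivative[OF r cont deriv jump])
  moreover have "G 1 - G (-1) = - pi * r"
    using r by (simp add: G_def H_def algebra_simps)
  ultimately show ?thesis
    by simp
qed

lemma sin_mult_arccos_recurrence:
  fixes c s :: real
  assumes "-1 \<le> s" "s \<le> 1"
  shows "sin ((c + 2) * arccos s) = 2 * s * sin ((c + 1) * arccos s) - sin (c * arccos s)"
  using sin_add[of "(c + 1) * arccos s" "arccos s"] sin_diff[of "(c + 1) * arccos s" "arccos s"] assms
  by (simp add: algebra_simps)

lemma cos_mult_arccos_recurrence: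
  fixes c s :: real
  assumes "-1 \<le> s" "s \<le> 1"
  shows "cos ((c + 2) * arccos s) = 2 * s * cos ((c + 1) * arccos s) - cos (c * arccos s)"
  using cos_add[of "(c + 1) * arccos s" "arccos s"] cos_diff[of "(c + 1) * arccos s" "arccos s"] assms
  by (simp add: algebra_simps)

lemma sin_mult_arccos_div_recurrence:
  fixes c r s :: real
  assumes "-1 \<le> s" "s \<le> 1" "s \<noteq> r"
  shows "sin ((c + 2) * arccos s) / (s - r) =
    2 * r * (sin ((c + 1) * arccos s) / (s - r)) - sin (c * arccos s) / (s - r) + 2 * sin ((c + 1) * arccos s)"
proof -
  have "sin ((c + 2) * arccos s) =
      2 * r * sin ((c + 1) * arccos s) - sin (c * arccos s) + 2 * sin ((c + 1) * arccos s) * (s - r)"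
    unfolding sin_mult_arccos_recurrence[OF assms(1,2)] by (simp add: algebra_simps)
  moreover have "s - r \<noteq> 0"
    using assms(3) by simp
  ultimately show ?thesis
    by (simp add: add_divide_distrib diff_divide_distrib)
qed

lemma pv_trunc_sin_mult_arccos_recurrence:
  fixes c r e :: real
  assumes r: "-1 < r" "r < 1" and e: "e > 0"
  shows "pv_trunc (\<lambda>s. sin ((c + 2) * arccos s)) r e =
    2 * r * pv_trunc (\<lambda>s. sin ((c + 1) * arccos s)) r e - pv_trunc (\<lambda>s. sin (c * arccos s)) r e
    + 2 * (integral {-1..r-e} (\<lambda>s. sin ((c + 1) * arccos s))
      + integral {r+e..1} (\<lambda>s. sin ((c + 1) * arccos s)))"
proof -
  have piece: "integral {a..b} (\<lambda>s. sin ((c + 2) * arccos s) / (s - r)) =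
      2 * r * integral {a..b} (\<lambda>s. sin ((c + 1) * arccos s) / (s - r))
      - integral {a..b} (\<lambda>s. sin (c * arccos s) / (s - r))
      + 2 * integral {a..b} (\<lambda>s. sin ((c + 1) * arccos s))"
    if ab: "{a..b} \<subseteq> {-1..1} - {r}" for a b
  proof -
    have int: "(\<lambda>s. sin (d * arccos s) / (s - r)) integrable_on {a..b}"
      "(\<lambda>s. sin (d * arccos s)) integrable_on {a..b}" for d
      using ab by (auto intro!: integrable_continuous_interval continuous_intros)
    have "integral {a..b} (\<lambda>s. sin ((c + 2) * arccos s) / (s - r)) =
        integral {a..b} (\<lambda>s. 2 * r * (sin ((c + 1) * arccos s) / (s - r))
          - sin (c * arccos s) / (s - r) + 2 * sin ((c + 1) * arccos s))"
      using ab by (intro integral_cong sin_mult_arccos_div_recurrence) auto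
    also have "\<dots> = 2 * r * integral {a..b} (\<lambda>s. sin ((c + 1) * arccos s) / (s - r))
        - integral {a..b} (\<lambda>s. sin (c * arccos s) / (s - r))
        + 2 * integral {a..b} (\<lambda>s. sin ((c + 1) * arccos s))"
      by (intro integral_unique has_integral_add has_integral_diff has_integral_mult_right
          integrable_integral int)
    finally show ?thesis .
  qed
  have sub: "{-1..r-e} \<subseteq> {-1..1} - {r}" "{r+e..1} \<subseteq> {-1..1} - {r}"
    using r e by auto
  show ?thesis
    unfolding pv_trunc_def piece[OF sub(1)] piece[OF sub(2)] by (simp add: algebra_simps)
qed

lemma tendsto_pv_trunc_sin_mult_arccos:
  assumes r: "-1 < r" "r < 1"
  shows "(pv_trunc (\<lambda>s. sin (real K * arccos s)) r \<longlongrightarrow>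
    (if K = 0 then 0 else - pi * cos (real K * arccos r))) (at_right 0)"
proof (induction K rule: induct_nat_012)
  case 0
  then show ?case
    by (simp add: pv_trunc_def)
next
  case 1
  then show ?case
    using tendsto_pv_trunc_sin_arccos[OF r] r by simp
next
  case (ge2 k)
  let ?c = "real k"
  let ?part = "\<lambda>e. integral {-1..r-e} (\<lambda>s. sin ((?c + 1) * arccos s))
    + integral {r+e..1} (\<lambda>s. sin ((?c + 1) * arccos s))"
  have "\<forall>\<^sub>F e in at_right 0. 2 * r * pv_trunc (\<lambda>s. sin ((?c + 1) * arccos s)) r e
      - pv_trunc (\<lambda>s. sin (?c * arccos s)) r e + 2 * ?part e = pv_trunc (\<lambda>s. sin ((?c + 2) * arccos s)) r e"
    using eventually_at_right_less
    by (rule eventually_mono) (rule pv_trunc_sin_mult_arccos_recurrence[OF r, symmetric])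
  moreover have "((\<lambda>e. 2 * r * pv_trunc (\<lambda>s. sin ((?c + 1) * arccos s)) r e
      - pv_trunc (\<lambda>s. sin (?c * arccos s)) r e + 2 * ?part e) \<longlongrightarrow>
    2 * r * (- pi * cos ((?c + 1) * arccos r)) - (if k = 0 then 0 else - pi * cos (?c * arccos r))
      + 2 * (if k + 1 = 1 then pi / 2 else 0)) (at_right 0)"
    using ge2 tendsto_punctured_integral_sin_mult_arccos[of "k + 1", OF _ r]
    by (intro tendsto_intros) (simp_all add: add.commute)
  moreover have "2 * r * (- pi * cos ((?c + 1) * arccos r)) - (if k = 0 then 0 else - pi * cos (?c * arccos r))
      + 2 * (if k + 1 = 1 then pi / 2 else 0) = - pi * cos ((?c + 2) * arccos r)"
    unfolding cos_mult_arccos_recurrence[OF less_imp_le[OF r(1)] less_imp_le[OF r(2)]]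
    using r by (cases "k = 0") (simp_all add: algebra_simps)
  ultimately have "(pv_trunc (\<lambda>s. sin ((?c + 2) * arccos s)) r \<longlongrightarrow> - pi * cos ((?c + 2) * arccos r))
      (at_right 0)"
    using Lim_transform_eventually by fastforce
  moreover have "real (Suc (Suc k)) = ?c + 2"
    by simp
  ultimately show ?case
    by (simp only: nat.distinct if_False)
qed

lemma pv_trunc_sum:
  assumes "finite J" and cont: "\<And>j. j \<in> J \<Longrightarrow> continuous_on {-1..1} (f j)"
    and r: "-1 < r" "r < 1" and e: "e > 0"
  shows "pv_trunc (\<lambda>s. \<Sum>j\<in>J. c j * f j s) r e = (\<Sum>j\<in>J. c j * pv_trunc (f j) r e)"
proof -
  have piece: "integral {a..b} (\<lambda>s. (\<Sum>j\<in>J. c j * f j s) / (s - r)) =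
      (\<Sum>j\<in>J. c j * integral {a..b} (\<lambda>s. f j s / (s - r)))"
    if ab: "{a..b} \<subseteq> {-1..1} - {r}" for a b
  proof -
    have int: "(\<lambda>s. f j s / (s - r)) integrable_on {a..b}" if "j \<in> J" for j
      using ab cont[OF that]
      by (intro integrable_continuous_interval continuous_intros) (auto elim: continuous_on_subset)
    have "integral {a..b} (\<lambda>s. (\<Sum>j\<in>J. c j * f j s) / (s - r)) =
        integral {a..b} (\<lambda>s. \<Sum>j\<in>J. c j * (f j s / (s - r)))"
      by (simp add: sum_divide_distrib)
    also have "\<dots> = (\<Sum>j\<in>J. integral {a..b} (\<lambda>s. c j * (f j s / (s - r))))"
      using \<open>finite J\<close> int by (intro integral_sum integrable_on_mult_right)
    also have "\<dots> = (\<Sum>j\<in>J. c j * integral {a..b} (\<lambda>s. f j s / (s - r)))"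
      by (simp only: integral_mult_right)
    finally show ?thesis .
  qed
  have sub: "{-1..r-e} \<subseteq> {-1..1} - {r}" "{r+e..1} \<subseteq> {-1..1} - {r}"
    using r e by auto
  show ?thesis
    unfolding pv_trunc_def piece[OF sub(1)] piece[OF sub(2)] by (simp add: sum.distrib distrib_left)
qed

lemma cpv_int_sin_mult_arccos_sum:
  fixes c :: "'i \<Rightarrow> real" and K :: "'i \<Rightarrow> nat"
  assumes "finite J" and K: "\<And>j. j \<in> J \<Longrightarrow> K j \<noteq> 0" and r: "-1 < r" "r < 1"
  shows "cpv_int (\<lambda>s. \<Sum>j\<in>J. c j * sin (real (K j) * arccos s)) r
    = - pi * (\<Sum>j\<in>J. c j * cos (real (K j) * arccos r))"
proof (rule cpv_int_eqI)
  have "(pv_trunc (\<lambda>s. sin (real (K j) * arccos s)) r \<longlongrightarrow> - pi * cos (real (K j) * arccos r)) (at_right 0)"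
    if "j \<in> J" for j
    using tendsto_pv_trunc_sin_mult_arccos[OF r, of "K j"] K[OF that] by simp
  then have "((\<lambda>e. \<Sum>j\<in>J. c j * pv_trunc (\<lambda>s. sin (real (K j) * arccos s)) r e) \<longlongrightarrow>
      (\<Sum>j\<in>J. c j * (- pi * cos (real (K j) * arccos r)))) (at_right 0)"
    by (intro tendsto_sum tendsto_mult_left)
  moreover have "\<forall>\<^sub>F e in at_right 0. (\<Sum>j\<in>J. c j * pv_trunc (\<lambda>s. sin (real (K j) * arccos s)) r e)
      = pv_trunc (\<lambda>s. \<Sum>j\<in>J. c j * sin (real (K j) * arccos s)) r e"
    using eventually_at_right_less
    by (rule eventually_mono) (intro pv_trunc_sum[symmetric] \<open>finite J\<close> r continuous_intros, auto)
  ultimately show "(pv_trunc (\<lambda>s. \<Sum>j\<in>J. c j * sin (real (K j) * arccos s)) r \<longlongrightarrow>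
      - pi * (\<Sum>j\<in>J. c j * cos (real (K j) * arccos r))) (at_right 0)"
    by (simp add: Lim_transform_eventually sum_distrib_left mult_ac)
qed

section \<open>Finite-part integrals\<close>

lemma hadamard_fp_cong:
  assumes "\<And>s. s \<in> {-1..1} \<Longrightarrow> D s = E s" and "r \<in> {-1<..<1}"
  shows "hadamard_fp (Suc k) D r = hadamard_fp (Suc k) E r"
  using assms(2)
proof (induction k arbitrary: r)
  case 0
  have eq: "\<forall>\<^sub>F e in at_right 0. pv_trunc D r e = pv_trunc E r e"
    using eventually_at_right_less
  proof (rule eventually_mono)
    fix e :: real assume "0 < e"
    with 0 have "{-1..r-e} \<subseteq> {-1..1}" "{r+e..1} \<subseteq> {-1..1}" by auto
    then show "pv_trunc D r e = pv_trunc E r e"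
      unfolding pv_trunc_def using assms(1) by (intro arg_cong2[where f = "(+)"] integral_cong) auto
  qed
  then have "Lim (at_right 0) (pv_trunc D r) = Lim (at_right 0) (pv_trunc E r)"
    by (simp add: Topological_Spaces.Lim_def tendsto_cong)
  then show ?case
    by (simp add: cpv_int_def pv_trunc_def[abs_def])
next
  case (Suc k)
  have "\<forall>\<^sub>F y in nhds r. hadamard_fp (Suc k) D y = hadamard_fp (Suc k) E y"
    using eventually_nhds_in_open[OF open_greaterThanLessThan Suc.prems]
    by (rule eventually_mono) (rule Suc.IH)
  then have "deriv (hadamard_fp (Suc k) D) r = deriv (hadamard_fp (Suc k) E) r"
    by (rule deriv_cong_ev) simp
  then show ?case
    by simp
qed

lemma hadamard_fp_Suc_Suc_eqI:
  assumes "\<And>y. y \<in> {-1<..<1} \<Longrightarrow> hadamard_fp (Suc k) D y = f y"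
    and "r \<in> {-1<..<1}" and "(f has_real_derivative f') (at r)"
  shows "hadamard_fp (Suc (Suc k)) D r = f' / (real k + 1)"
proof -
  have "(hadamard_fp (Suc k) D has_real_derivative f') (at r)"
    using has_field_derivative_transform_within_open[OF assms(3) open_greaterThanLessThan assms(2)] assms(1)
    by simp
  then show ?thesis
    by (simp add: DERIV_imp_deriv)
qed

definition chebT_deriv1 :: "real \<Rightarrow> real \<Rightarrow> real" where
  "chebT_deriv1 K x = K * sin (K * arccos x) / sqrt (1 - x\<^sup>2)"

definition chebT_deriv2 :: "real \<Rightarrow> real \<Rightarrow> real" where
  "chebT_deriv2 K x =
    K * (- K * cos (K * arccos x) / sqrt (1 - x\<^sup>2) ^ 2 + x * sin (K * arccos x) / sqrt (1 - x\<^sup>2) ^ 3)"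

definition chebT_deriv3 :: "real \<Rightarrow> real \<Rightarrow> real" where
  "chebT_deriv3 K x =
    K * (- K\<^sup>2 * sin (K * arccos x) / sqrt (1 - x\<^sup>2) ^ 3
      - 3 * K * x * cos (K * arccos x) / sqrt (1 - x\<^sup>2) ^ 4
      + sin (K * arccos x) / sqrt (1 - x\<^sup>2) ^ 3 + 3 * x\<^sup>2 * sin (K * arccos x) / sqrt (1 - x\<^sup>2) ^ 5)"

lemma DERIV_chebT_derivs:
  fixes K x :: real
  assumes "-1 < x" "x < 1"
  shows "((\<lambda>x. cos (K * arccos x)) has_real_derivative chebT_deriv1 K x) (at x)"
    and "(chebT_deriv1 K has_real_derivative chebT_deriv2 K x) (at x)"
    and "(chebT_deriv2 K has_real_derivative chebT_deriv3 K x) (at x)"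
proof -
  \<comment> \<open>Stated for abstract a, b, w so that the simplifier cannot unfold sin, cos and sqrt.\<close>
  have chain:
    "((\<lambda>x. K * a x / w x) has_real_derivative K * (- K * b x / w x ^ 2 + x * a x / w x ^ 3)) (at x)"
    "((\<lambda>x. K * (- K * b x / w x ^ 2 + x * a x / w x ^ 3)) has_real_derivative
      K * (- K\<^sup>2 * a x / w x ^ 3 - 3 * K * x * b x / w x ^ 4 + a x / w x ^ 3 + 3 * x\<^sup>2 * a x / w x ^ 5)) (at x)"
    if "(a has_real_derivative - K * b x / w x) (at x)" "(b has_real_derivative K * a x / w x) (at x)"
      "(w has_real_derivative - x / w x) (at x)" "w x \<noteq> 0"
    for a b w :: "real \<Rightarrow> real"
    using that by (auto intro!: derivative_eq_intros simp: field_simps eval_nat_numeral)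
  have "x\<^sup>2 < 1"
    using assms by (simp add: abs_square_less_1)
  then have dsin: "((\<lambda>x. sin (K * arccos x)) has_real_derivative - K * cos (K * arccos x) / sqrt (1 - x\<^sup>2)) (at x)"
    and dcos: "((\<lambda>x. cos (K * arccos x)) has_real_derivative K * sin (K * arccos x) / sqrt (1 - x\<^sup>2)) (at x)"
    and dw: "((\<lambda>x. sqrt (1 - x\<^sup>2)) has_real_derivative - x / sqrt (1 - x\<^sup>2)) (at x)"
    and w: "sqrt (1 - x\<^sup>2) \<noteq> 0"
    using assms by (auto intro!: derivative_eq_intros simp: field_simps)
  note chain = chain[where a = "\<lambda>x. sin (K * arccos x)" and b = "\<lambda>x. cos (K * arccos x)"
      and w = "\<lambda>x. sqrt (1 - x\<^sup>2)", OF dsin dcos dw w]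
  show "((\<lambda>x. cos (K * arccos x)) has_real_derivative chebT_deriv1 K x) (at x)"
    using dcos by (simp add: chebT_deriv1_def)
  show "(chebT_deriv1 K has_real_derivative chebT_deriv2 K x) (at x)"
    using chain(1) by (simp add: chebT_deriv1_def[abs_def] chebT_deriv2_def)
  show "(chebT_deriv2 K has_real_derivative chebT_deriv3 K x) (at x)"
    using chain(2) by (simp add: chebT_deriv2_def[abs_def] chebT_deriv3_def)
qed

lemma hadamard_fp_4_sin_mult_arccos_sum:
  fixes c :: "'i \<Rightarrow> real" and K :: "'i \<Rightarrow> nat"
  assumes "finite J" and K: "\<And>j. j \<in> J \<Longrightarrow> K j \<noteq> 0" and r: "-1 < r" "r < 1"
  shows "hadamard_fp 4 (\<lambda>s. \<Sum>j\<in>J. c j * sin (real (K j) * arccos s)) r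
    = - pi / 6 * (\<Sum>j\<in>J. c j * chebT_deriv3 (real (K j)) r)"
proof -
  let ?D = "\<lambda>s. \<Sum>j\<in>J. c j * sin (real (K j) * arccos s)"
  define P where "P f x = - pi * (\<Sum>j\<in>J. c j * f (real (K j)) x)"
    for f :: "real \<Rightarrow> real \<Rightarrow> real" and x
  have DERIV_P: "(P f has_real_derivative P f' y) (at y)"
    if "\<And>K. (f K has_real_derivative f' K y) (at y)" for f f' y
    unfolding P_def[abs_def] using that by (intro DERIV_cmult DERIV_sum) auto
  have order_1: "hadamard_fp (Suc 0) ?D y = P (\<lambda>K x. cos (K * arccos x)) y" if "y \<in> {-1<..<1}" for y
    using cpv_int_sin_mult_arccos_sum[OF assms(1,2)] that by (simp add: P_def)
  have order_2: "hadamard_fp (Suc (Suc 0)) ?D y = P chebT_deriv1 y" if "y \<in> {-1<..<1}" for y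
    using hadamard_fp_Suc_Suc_eqI[OF order_1 that DERIV_P[of _ chebT_deriv1, OF DERIV_chebT_derivs(1)]] that
    by simp
  have order_3: "hadamard_fp (Suc (Suc (Suc 0))) ?D y = P chebT_deriv2 y / 2" if "y \<in> {-1<..<1}" for y
    using hadamard_fp_Suc_Suc_eqI[OF order_2 that
        DERIV_P[of chebT_deriv1 chebT_deriv2, OF DERIV_chebT_derivs(2)]] that
    by simp
  have "hadamard_fp (Suc (Suc (Suc (Suc 0)))) ?D r = P chebT_deriv3 r / 2 / 3"
    using hadamard_fp_Suc_Suc_eqI[OF order_3 _
        DERIV_cdivide[OF DERIV_P[of chebT_deriv2 chebT_deriv3, OF DERIV_chebT_derivs(3)]]] r
    by simp
  then show ?thesis
    by (simp add: numeral_eq_Suc P_def)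
qed

lemma chebT_deriv3_eq_chebU:
  fixes p :: nat and r :: real
  assumes r: "-1 < r" "r < 1"
  shows "chebT_deriv3 (real p + 3) r = (real p + 3) *
    ((real p + 4) * (real p + 5) * chebU p r
      - (2 * (real p)\<^sup>2 + 12 * real p + 10) * chebU (p + 2) r
      + (real p + 2) * (real p + 1) * chebU (p + 4) r) / (4 * (1 - r\<^sup>2)\<^sup>2)"
proof -
  define K where "K = real p + 3"
  define t where "t = arccos r"
  define A where "A = sin (K * t)"
  define B where "B = cos (K * t)"
  define S where "S = sqrt (1 - r\<^sup>2)"
  have "r\<^sup>2 < 1"
    using r by (simp add: abs_square_less_1)
  then have S: "S > 0" "1 - r\<^sup>2 = S\<^sup>2"
    by (simp_all add: S_def)
  have sin_t: "sin t = S" and cos_t: "cos t = r"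
    using r by (simp_all add: t_def S_def sin_arccos)
  have sin_2t: "sin (2 * t) = 2 * S * r" and cos_2t: "cos (2 * t) = 2 * r\<^sup>2 - 1"
    using sin_t cos_t by (simp_all add: sin_double cos_double_cos)
  have U0: "chebU p r = (A * (2 * r\<^sup>2 - 1) - B * (2 * S * r)) / S"
  proof -
    have "(real p + 1) * t = K * t - 2 * t"
      by (simp add: K_def algebra_simps)
    then show ?thesis
      by (simp add: chebU_def t_def[symmetric] sin_t A_def B_def sin_diff sin_2t cos_2t)
  qed
  have U2: "chebU (p + 2) r = A / S"
  proof -
    have "(real (p + 2) + 1) * t = K * t"
      by (simp add: K_def)
    then show ?thesis
      by (simp only: chebU_def t_def[symmetric] sin_t A_def)
  qed
  have U4: "chebU (p + 4) r = (A * (2 * r\<^sup>2 - 1) + B * (2 * S * r)) / S"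
  proof -
    have "(real (p + 4) + 1) * t = K * t + 2 * t"
      by (simp add: K_def algebra_simps)
    then show ?thesis
      by (simp add: chebU_def t_def[symmetric] sin_t A_def B_def sin_add sin_2t cos_2t)
  qed
  have p: "real p = K - 3"
    by (simp add: K_def)
  show ?thesis
    unfolding U0 U2 U4 S(2) K_def[symmetric] chebT_deriv3_def t_def[symmetric] S_def[symmetric]
      A_def[symmetric] B_def[symmetric] p
    using S by (simp add: field_simps A_def[symmetric] B_def[symmetric]) algebra
qed

lemma hadamard_fp_4_chebU_weight:
  fixes n M :: nat and r :: real
  assumes n: "2 * M \<le> n" and r: "-1 < r" "r < 1"
  shows "hadamard_fp 4 (\<lambda>s. chebU n s * (1 - s\<^sup>2) powr (real M + 1/2)) r = - pi / 6 * ((-1) ^ M / 4 ^ M) *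
    (\<Sum>j\<le>2 * M. (-1) ^ j * real (2 * M choose j) * chebT_deriv3 (real (n - 2 * M + 2 * j + 1)) r)"
proof -
  define K where "K j = n - 2 * M + 2 * j + 1" for j
  define c where "c j = (-1) ^ M / 4 ^ M * ((-1) ^ j * real (2 * M choose j))" for j :: nat
  have "hadamard_fp (Suc 3) (\<lambda>s. chebU n s * (1 - s\<^sup>2) powr (real M + 1/2)) r =
      hadamard_fp (Suc 3) (\<lambda>s. \<Sum>j\<le>2 * M. c j * sin (real (K j) * arccos s)) r"
    using chebU_mult_weight_eq_sin_sum[OF n] r
    by (intro hadamard_fp_cong) (auto simp: K_def c_def sum_distrib_left mult.assoc)
  also have "\<dots> = - pi / 6 * (\<Sum>j\<le>2 * M. c j * chebT_deriv3 (real (K j)) r)"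
    using hadamard_fp_4_sin_mult_arccos_sum[of "{..2 * M}" K r c] r by (simp add: K_def)
  finally show ?thesis
    by (simp add: K_def c_def sum_distrib_left mult.assoc)
qed

lemma sum_chebT_deriv3_eq_sum_chebU:
  fixes m n :: nat and r :: real
  assumes r: "-1 < r" "r < 1"
  shows "(\<Sum>j\<le>2 * m - 2. (-1) ^ j * real ((2 * m - 2) choose j) * chebT_deriv3 (real (n - 2 * m + 2 * j) + 3) r) =
    (\<Sum>j = 0..2 * m - 2.
       (let p = n - 2 * m + 2 * j in
        (-1) ^ j * real ((2 * m - 2) choose j) * (real p + 3) *
        ((real p + 4) * (real p + 5) * chebU p r
         - (2 * (real p)\<^sup>2 + 12 * real p + 10) * chebU (p + 2) r
         + (real p + 2) * (real p + 1) * chebU (p + 4) r))) / (4 * (1 - r\<^sup>2)\<^sup>2)"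
  unfolding sum_divide_distrib atLeast0AtMost Let_def chebT_deriv3_eq_chebU[OF r]
  by (simp add: mult.assoc)

theorem mainTheorem8:
  fixes m n :: nat and r :: real
  assumes "m \<ge> 2" and "n \<ge> 2 * m + 1" and "\<bar>r\<bar> < 1"
  shows "hadamard_fp 4 (\<lambda>s. chebU n s * (1 - s\<^sup>2) powr (real m - 1/2)) r =
    (-1) ^ m * (1/2) ^ (2 * m + 1) * (1/3) * (pi / (1 - r\<^sup>2)\<^sup>2) *
    (\<Sum>j = 0..2 * m - 2.
       (let p = n - 2 * m + 2 * j in
        (-1) ^ j * real ((2 * m - 2) choose j) * (real p + 3) *
        ((real p + 4) * (real p + 5) * chebU p r
         - (2 * (real p)\<^sup>2 + 12 * real p + 10) * chebU (p + 2) r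
         + (real p + 2) * (real p + 1) * chebU (p + 4) r)))"
  (is "?lhs = ?C * ?S")
proof -
  define M where "M = m - 1"
  have m: "m = M + 1" "real m - 1/2 = real M + 1/2" "2 * m - 2 = 2 * M"
    using assms(1) by (simp_all add: M_def)
  have r: "-1 < r" "r < 1" and "1 - r\<^sup>2 \<noteq> 0"
    using assms(3) abs_square_less_1[of r] by auto
  have "?lhs = - pi / 6 * ((-1) ^ M / 4 ^ M) *
      (\<Sum>j\<le>2 * M. (-1) ^ j * real (2 * M choose j) * chebT_deriv3 (real (n - 2 * M + 2 * j + 1)) r)"
    unfolding m(2) by (rule hadamard_fp_4_chebU_weight) (use assms(2) r m(1) in auto)
  also have "(\<Sum>j\<le>2 * M. (-1) ^ j * real (2 * M choose j) * chebT_deriv3 (real (n - 2 * M + 2 * j + 1)) r) =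
      (\<Sum>j\<le>2 * m - 2. (-1) ^ j * real ((2 * m - 2) choose j) * chebT_deriv3 (real (n - 2 * m + 2 * j) + 3) r)"
    using assms(2) by (intro sum.cong) (simp_all add: m add_diff_eq)
  also have "\<dots> = ?S / (4 * (1 - r\<^sup>2)\<^sup>2)"
    by (rule sum_chebT_deriv3_eq_sum_chebU[OF r])
  also have "- pi / 6 * ((-1) ^ M / 4 ^ M) * (?S / (4 * (1 - r\<^sup>2)\<^sup>2)) = ?C * ?S"
  proof -
    have "(-1) ^ m = - ((-1) ^ M :: real)" "(1 / 2) ^ (2 * m + 1) = 1 / (8 * 4 ^ M :: real)"
      by (simp_all add: m(1) power_add power_mult power_one_over)
    moreover have "- pi / 6 * ((-1) ^ M / 4 ^ M) * (S / (4 * (1 - r\<^sup>2)\<^sup>2)) =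
        - ((-1) ^ M) * (1 / (8 * 4 ^ M)) * (1 / 3) * (pi / (1 - r\<^sup>2)\<^sup>2) * S" for S :: real
      using \<open>1 - r\<^sup>2 \<noteq> 0\<close> by (simp add: field_simps)
    ultimately show ?thesis
      by (simp only:)
  qed
  finally show ?thesis .
qed

end
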